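(* Every bipartite graph is strongly EFX-orientable.
   Context: All graphs are finite and simple. For a graph $G=(V,E)$ and $v\in V$, $E(v)$ is the set of edges incident to $v$. A graphical instance on $G$ assigns to each vertex $v$ a valuation $f_v:2^E\to\mathbb{R}_{\ge 0}$ that is monotone ($A\subseteq B\Rightarrow f_v(A)\le f_v(B)$) and satisfies $f_v(X)=f_v(X\cap E(v))$ for all $X\subseteq E$. An orientation of $G$ chooses for each edge one of its endpoints as its head; vertex $v$ receives the bundle $X_v$ of edges whose head is $v$. The orientation is EFX if for all $u,v\in V$ and every $g\in X_v$, $f_u(X_u)\ge f_u(X_v\setminus\{g\})$. A graph $G$ is strongly EFX-orientable if for every graphical instance on $G$ there exists an EFX orientation. *)

theory Defs
  imports Complex_Main
begin

definition simple_graph :: "'v set \<Rightarrow> 'v set set \<Rightarrow> bool" where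
  "simple_graph V E \<longleftrightarrow> finite V \<and> (\<forall>e\<in>E. e \<subseteq> V \<and> card e = 2)"

definition bipartite :: "'v set \<Rightarrow> 'v set set \<Rightarrow> bool" where
  "bipartite V E \<longleftrightarrow> (\<exists>A B. A \<union> B = V \<and> A \<inter> B = {} \<and>
      (\<forall>e\<in>E. \<exists>a b. a \<in> A \<and> b \<in> B \<and> e = {a, b}))"

definition incident :: "'v set set \<Rightarrow> 'v \<Rightarrow> 'v set set" where
  "incident E v = {e\<in>E. v \<in> e}"

definition graphical_instance :: "'v set \<Rightarrow> 'v set set \<Rightarrow> ('v \<Rightarrow> 'v set set \<Rightarrow> real) \<Rightarrow> bool" where
  "graphical_instance V E f \<longleftrightarrow>
     (\<forall>v\<in>V. (\<forall>X. X \<subseteq> E \<longrightarrow> f v X \<ge> 0)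
          \<and> (\<forall>X Y. X \<subseteq> Y \<and> Y \<subseteq> E \<longrightarrow> f v X \<le> f v Y)
          \<and> (\<forall>X. X \<subseteq> E \<longrightarrow> f v X = f v (X \<inter> incident E v)))"

definition orientation :: "'v set set \<Rightarrow> ('v set \<Rightarrow> 'v) \<Rightarrow> bool" where
  "orientation E h \<longleftrightarrow> (\<forall>e\<in>E. h e \<in> e)"

definition bundle_of :: "'v set set \<Rightarrow> ('v set \<Rightarrow> 'v) \<Rightarrow> 'v \<Rightarrow> 'v set set" where
  "bundle_of E h v = {e\<in>E. h e = v}"

definition EFX_orientation :: "'v set \<Rightarrow> 'v set set \<Rightarrow> ('v \<Rightarrow> 'v set set \<Rightarrow> real) \<Rightarrow> ('v set \<Rightarrow> 'v) \<Rightarrow> bool" where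
  "EFX_orientation V E f h \<longleftrightarrow> orientation E h \<and>
     (\<forall>u\<in>V. \<forall>v\<in>V. \<forall>g\<in>bundle_of E h v. f u (bundle_of E h u) \<ge> f u (bundle_of E h v - {g}))"

definition strongly_EFX_orientable :: "'v set \<Rightarrow> 'v set set \<Rightarrow> bool" where
  "strongly_EFX_orientable V E \<longleftrightarrow>
     (\<forall>f. graphical_instance V E f \<longrightarrow> (\<exists>h. EFX_orientation V E f h))"

end

theory Submission
  imports Defs
begin

text \<open>Let every vertex of the side B receive exactly its most valuable incident edge
  (as a single good), and give every other edge to its endpoint outside B. A vertex of B then
  owns at most one edge, so removing any good from its bundle leaves nothing to envy. A vertex u
  can see in the bundle of a vertex v outside B only the edge uv, since the valuation of u
  depends only on its incident edges and the graph is simple; if that edge exists, u lies in B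
  and owns an edge it values at least as much.\<close>

lemma arg_max_on_finite:
  fixes g :: "'a \<Rightarrow> 'b::linorder"
  assumes "finite S" "S \<noteq> {}"
  shows "arg_max_on g S \<in> S \<and> (\<forall>y\<in>S. g y \<le> g (arg_max_on g S))"
proof -
  have "Max (g ` S) \<in> g ` S" using assms by simp
  then obtain x where "x \<in> S" "g x = Max (g ` S)" by auto
  then have "\<exists>x. x \<in> S \<and> (\<forall>y\<in>S. g y \<le> g x)"
    using assms(1) by auto
  then show ?thesis
    unfolding arg_max_on_def arg_max_def is_arg_max_linorder Ball_def by (rule someI_ex)
qed

definition favourite_edge ::
    "('v \<Rightarrow> 'v set set \<Rightarrow> 'b::linorder) \<Rightarrow> 'v set set \<Rightarrow> 'v \<Rightarrow> 'v set" where
  "favourite_edge f E b = arg_max_on (\<lambda>e. f b {e}) (incident E b)"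

lemma favourite_edge_max:
  assumes "finite E" "e \<in> E" "u \<in> e"
  shows "favourite_edge f E u \<in> incident E u" "f u {e} \<le> f u {favourite_edge f E u}"
proof -
  have "finite (incident E u)" "e \<in> incident E u"
    using assms unfolding incident_def by auto
  then show "favourite_edge f E u \<in> incident E u" "f u {e} \<le> f u {favourite_edge f E u}"
    using arg_max_on_finite[of "incident E u" "\<lambda>e. f u {e}"]
    unfolding favourite_edge_def by auto
qed

text \<open>On an edge with exactly one endpoint in B, the two \<open>the_elem\<close> terms are that endpoint
  and the other one.\<close>
definition favourite_orientation ::
    "'v set \<Rightarrow> ('v \<Rightarrow> 'v set set \<Rightarrow> 'b::linorder) \<Rightarrow> 'v set set \<Rightarrow> 'v set \<Rightarrow> 'v" where
  "favourite_orientation B f E e =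
     (let b = the_elem (e \<inter> B) in if favourite_edge f E b = e then b else the_elem (e - B))"

lemma favourite_orientation_pair:
  assumes "a \<notin> B" "b \<in> B"
  shows "favourite_orientation B f E {a, b} = (if favourite_edge f E b = {a, b} then b else a)"
proof -
  have "{a, b} \<inter> B = {b}" "{a, b} - B = {a}" using assms by auto
  then show ?thesis unfolding favourite_orientation_def by simp
qed

lemma incident_inter_incident:
  assumes "\<And>e. e \<in> E \<Longrightarrow> \<exists>x y. e = {x, y}" "u \<noteq> v"
  shows "incident E u \<inter> incident E v \<subseteq> {{u, v}}"
proof
  fix e assume "e \<in> incident E u \<inter> incident E v"
  then have "e \<in> E" "u \<in> e" "v \<in> e" unfolding incident_def by auto
  moreover obtain x y where "e = {x, y}" using assms(1) \<open>e \<in> E\<close> by blast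
  ultimately show "e \<in> {{u, v}}" using assms(2) by auto
qed

context
  fixes B :: "'v set" and E :: "'v set set" and f :: "'v \<Rightarrow> 'v set set \<Rightarrow> real"
  assumes edges_cross: "\<And>e. e \<in> E \<Longrightarrow> \<exists>a b. a \<notin> B \<and> b \<in> B \<and> e = {a, b}"
begin

lemma orientation_favourite_orientation: "orientation E (favourite_orientation B f E)"
  unfolding orientation_def
proof
  fix e assume "e \<in> E"
  then obtain a b where "a \<notin> B" "b \<in> B" "e = {a, b}" using edges_cross by blast
  then show "favourite_orientation B f E e \<in> e" by (simp add: favourite_orientation_pair)
qed

lemma bundle_favourite_orientation_subset:
  assumes "b \<in> B"
  shows "bundle_of E (favourite_orientation B f E) b \<subseteq> {favourite_edge f E b}"
proof
  fix e assume "e \<in> bundle_of E (favourite_orientation B f E) b"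
  then have "e \<in> E" and head: "favourite_orientation B f E e = b"
    unfolding bundle_of_def by auto
  then obtain x y where "x \<notin> B" "y \<in> B" "e = {x, y}" using edges_cross by blast
  with head assms show "e \<in> {favourite_edge f E b}"
    by (auto simp: favourite_orientation_pair split: if_splits)
qed

lemma favourite_edge_in_bundle:
  assumes "finite E" "e \<in> E" "b \<in> e" "b \<in> B"
  shows "favourite_edge f E b \<in> bundle_of E (favourite_orientation B f E) b"
proof -
  let ?e = "favourite_edge f E b"
  have "?e \<in> E" "b \<in> ?e"
    using favourite_edge_max(1)[OF assms(1-3)] unfolding incident_def by auto
  moreover obtain x y where "x \<notin> B" "y \<in> B" "?e = {x, y}" using edges_cross \<open>?e \<in> E\<close> by blast
  ultimately show ?thesis
    using assms(4) unfolding bundle_of_def by (auto simp: favourite_orientation_pair)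
qed

lemma bundle_favourite_orientation_incident:
  "bundle_of E (favourite_orientation B f E) v \<subseteq> incident E v"
  using orientation_favourite_orientation
  unfolding orientation_def bundle_of_def incident_def by auto

theorem EFX_favourite_orientation:
  assumes inst: "graphical_instance V E f" and "finite E"
  shows "EFX_orientation V E f (favourite_orientation B f E)"
proof -
  let ?X = "bundle_of E (favourite_orientation B f E)"
  have bundle_sub: "?X w \<subseteq> E" for w
    unfolding bundle_of_def by auto
  have mono: "f u X \<le> f u Y" if "u \<in> V" "X \<subseteq> Y" "Y \<subseteq> E" for u X Y
    using inst that unfolding graphical_instance_def by blast
  have restrict_incident: "f u X = f u (X \<inter> incident E u)" if "u \<in> V" "X \<subseteq> E" for u X
    using inst that unfolding graphical_instance_def by blast
  have "f u (?X v - {g}) \<le> f u (?X u)" if u: "u \<in> V" and g: "g \<in> ?X v" for u v g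
  proof (cases "u = v \<or> v \<in> B")
    case True
    then have "?X v - {g} \<subseteq> ?X u"
      using bundle_favourite_orientation_subset g by blast
    then show ?thesis by (rule mono[OF u _ bundle_sub])
  next
    case False
    then have "u \<noteq> v" "v \<notin> B" by auto
    have pairs: "\<exists>x y. e = {x, y}" if "e \<in> E" for e
      using edges_cross that by blast
    have "(?X v - {g}) \<inter> incident E u \<subseteq> {{u, v}} \<inter> E"
      using bundle_favourite_orientation_incident[of v] bundle_sub[of v]
        incident_inter_incident[OF pairs \<open>u \<noteq> v\<close>] by blast
    then have "f u (?X v - {g}) \<le> f u ({{u, v}} \<inter> E)"
      using restrict_incident[OF u] mono[OF u] bundle_sub by (metis Diff_subset Int_lower2 subset_trans)
    also have "\<dots> \<le> f u (?X u)"
    proof (cases "{u, v} \<in> E")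
      case True
      obtain a b where "a \<notin> B" "b \<in> B" "{u, v} = {a, b}" using edges_cross True by blast
      with \<open>v \<notin> B\<close> have "u \<in> B" by (auto simp: doubleton_eq_iff)
      have "f u {{u, v}} \<le> f u {favourite_edge f E u}"
        using favourite_edge_max(2)[OF \<open>finite E\<close> True, of u f] by simp
      also have "\<dots> \<le> f u (?X u)"
        using mono[OF u _ bundle_sub] favourite_edge_in_bundle[OF \<open>finite E\<close> True _ \<open>u \<in> B\<close>]
        by simp
      finally show ?thesis using True by simp
    next
      case False
      then show ?thesis using mono[OF u _ bundle_sub, of "{}"] by simp
    qed
    finally show ?thesis .
  qed
  then show ?thesis
    unfolding EFX_orientation_def using orientation_favourite_orientation by blast
qed

end

lemma simple_graph_finite_edges:
  assumes "simple_graph V E"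
  shows "finite E"
proof -
  have "E \<subseteq> Pow V" "finite V" using assms unfolding simple_graph_def by auto
  then show ?thesis by (simp add: finite_subset)
qed

theorem mainTheorem6:
  fixes V :: "'v set" and E :: "'v set set"
  assumes "simple_graph V E" and "bipartite V E"
  shows "strongly_EFX_orientable V E"
proof -
  obtain A B where disjoint: "A \<inter> B = {}"
    and crossing: "\<forall>e\<in>E. \<exists>a b. a \<in> A \<and> b \<in> B \<and> e = {a, b}"
    using assms(2) unfolding bipartite_def by blast
  have "\<exists>a b. a \<notin> B \<and> b \<in> B \<and> e = {a, b}" if edge: "e \<in> E" for e
  proof -
    obtain a b where "a \<in> A" "b \<in> B" "e = {a, b}" using crossing edge by blast
    with disjoint show ?thesis by blast
  qed
  then show ?thesis
    unfolding strongly_EFX_orientable_def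
    using EFX_favourite_orientation simple_graph_finite_edges[OF assms(1)] by blast
qed

end
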